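(* Let $n\ge2$ and $k\ge1$ be integers and $z_1,\dots,z_n$ indeterminates. Then \[ \sum_{\beta\in\mathrm{Pairs}(k,n)}\det(R_3(\beta))^2=n^{k-1}\sum_{b\in C(k+1,n)}D(z(b))^2 . \]
   Context: $\mathrm{Pairs}(k,n)$ is the set of multisets $\beta$ of $k$ pairs $\{\beta(v,1),\beta(v,2)\}$ with $1\le\beta(v,1)<\beta(v,2)\le n$. For $\beta$ listed in some order $\beta(1),\dots,\beta(k)$, $R_3(\beta)$ is the $k\times k$ matrix with entries $R_3(\beta)_{u,v}=z_{\beta(v,1)}^u-z_{\beta(v,2)}^u$ ($1\le u,v\le k$); $\det(R_3(\beta))^2$ is independent of the order. $C(k+1,n)$ is the set of $(k+1)$-element subsets $b=\{b_1<\dots<b_{k+1}\}$ of $\{1,\dots,n\}$ (empty if $k+1>n$), $z(b)=(z_{b_1},\dots,z_{b_{k+1}})$ and $D(x_1,\dots,x_m)=\prod_{1\le i<j\le m}(x_j-x_i)$. *)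

theory Defs
  imports "HOL-Library.Multiset" "HOL-Library.Product_Lexorder" "Jordan_Normal_Form.Determinant"
begin

definition Pairs :: "nat \<Rightarrow> nat \<Rightarrow> (nat \<times> nat) multiset set" where
  "Pairs k n = {\<beta>. size \<beta> = k \<and> set_mset \<beta> \<subseteq> {(i,j). 1 \<le> i \<and> i < j \<and> j \<le> n}}"

text \<open>R_3 for beta listed as bs = [beta(1),...,beta(k)]; entry (u,v) (1-based) is
  z_{beta(v,1)}^u - z_{beta(v,2)}^u; matrix indices here are 0-based.\<close>
definition R3 :: "(nat \<Rightarrow> 'a::comm_ring_1) \<Rightarrow> (nat \<times> nat) list \<Rightarrow> 'a mat" where
  "R3 z bs = mat (length bs) (length bs)
     (\<lambda>(u,v). z (fst (bs ! v)) ^ (u+1) - z (snd (bs ! v)) ^ (u+1))"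

definition Cset :: "nat \<Rightarrow> nat \<Rightarrow> nat set set" where
  "Cset m n = {b. b \<subseteq> {1..n} \<and> card b = m}"

definition Dz :: "(nat \<Rightarrow> 'a::comm_ring_1) \<Rightarrow> nat set \<Rightarrow> 'a" where
  "Dz z b = (\<Prod>(i,j)\<in>{(i,j). i \<in> b \<and> j \<in> b \<and> i < j}. z j - z i)"

end

theory Submission
  imports Defs "HOL-Computational_Algebra.Polynomial"
begin

text \<open>A multiset of pairs containing a repeated pair gives two equal columns in R_3, so the
  left-hand side is a sum over k-sets of pairs, and by Cauchy--Binet it is the determinant of the
  k x k Gram matrix with entries sum_{i<j} (z_i^u - z_j^u) (z_i^v - z_j^v). By Lagrange's identity
  these entries are n p_{u+v} - p_u p_v, where p_m = sum_i z_i^m, so the Gram matrix is the Chio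
  condensation, with pivot p_0 = n, of the Hankel matrix (p_{u+v})_{0 <= u,v <= k}; this produces
  the factor n^(k-1). Finally the Hankel matrix is V V^T for the Vandermonde matrix V = (z_i^u), and
  Cauchy--Binet once more expands its determinant into the squares of the maximal minors of V,
  which are the D(z(b)).\<close>

definition det_fun :: "nat \<Rightarrow> (nat \<Rightarrow> nat \<Rightarrow> 'a::comm_ring_1) \<Rightarrow> 'a" where
  "det_fun k X = det (mat k k (\<lambda>(i,j). X i j))"

lemma det_fun_Leibniz:
  "det_fun k X = (\<Sum>p | p permutes {0..<k}. signof p * (\<Prod>i=0..<k. X i (p i)))"
  unfolding det_fun_def
  by (subst det_def'[of _ k]) (auto intro!: sum.cong prod.cong simp: permutes_in_image)

lemma det_fun_cong:
  "(\<And>i j. i < k \<Longrightarrow> j < k \<Longrightarrow> X i j = Y i j) \<Longrightarrow> det_fun k X = det_fun k Y"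
  unfolding det_fun_def by (intro arg_cong[where f = det] eq_matI) auto

lemma det_fun_0 [simp]: "det_fun 0 X = 1"
  by (simp add: det_fun_def)

lemma det_fun_transpose: "det_fun k (\<lambda>i j. X j i) = det_fun k X"
proof -
  have "transpose_mat (mat k k (\<lambda>(i,j). X i j)) = mat k k (\<lambda>(i,j). X j i)"
    by (rule eq_matI) auto
  then show ?thesis
    unfolding det_fun_def by (metis det_transpose mat_carrier)
qed

lemma det_fun_rows_not_inj:
  assumes "\<not> inj_on f {0..<k}"
  shows "det_fun k (\<lambda>u v. X (f u) v) = 0"
proof -
  obtain i j where "i < k" "j < k" "i \<noteq> j" "f i = f j"
    using assms by (auto simp: inj_on_def)
  then show ?thesis
    unfolding det_fun_def by (intro det_identical_rows[of _ k i j]) (auto intro!: eq_vecI)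
qed

lemma det_fun_permute_rows:
  assumes p: "p permutes {0..<k}"
  shows "det_fun k (\<lambda>u v. X (p u) v) = signof p * det_fun k X"
proof -
  let ?A = "mat k k (\<lambda>(i,j). X i j)"
  have "mat k k (\<lambda>(i,j). ?A $$ (p i, j)) = mat k k (\<lambda>(i,j). X (p i) j)"
    using p by (auto intro!: eq_matI simp: permutes_in_image)
  then show ?thesis
    unfolding det_fun_def using det_permute_rows[OF _ p, of ?A] by simp
qed

lemma det_fun_mult_cols:
  "det_fun k (\<lambda>i j. X i j * c j) = (\<Prod>j=0..<k. c j) * det_fun k X"
proof -
  have "(\<Prod>i=0..<k. X i (p i) * c (p i)) = (\<Prod>j=0..<k. c j) * (\<Prod>i=0..<k. X i (p i))"
    if "p permutes {0..<k}" for p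
    using prod.permute[OF that, of c] by (simp add: prod.distrib o_def)
  then show ?thesis
    unfolding det_fun_Leibniz sum_distrib_left by (auto intro!: sum.cong)
qed

lemma det_fun_expand_first_col:
  assumes "\<And>i. 0 < i \<Longrightarrow> i \<le> m \<Longrightarrow> X i 0 = 0"
  shows "det_fun (Suc m) X = X 0 0 * det_fun m (\<lambda>i j. X (Suc i) (Suc j))"
proof -
  let ?A1 = "mat 1 1 (\<lambda>_. X 0 0)"
  let ?A2 = "mat 1 m (\<lambda>(_,j). X 0 (Suc j))"
  let ?A4 = "mat m m (\<lambda>(i,j). X (Suc i) (Suc j))"
  have "mat (Suc m) (Suc m) (\<lambda>(i,j). X i j) = four_block_mat ?A1 ?A2 (0\<^sub>m m 1) ?A4"
    by (rule eq_matI) (use assms in \<open>auto simp: less_Suc_eq_0_disj\<close>)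
  moreover have "det (four_block_mat ?A1 ?A2 (0\<^sub>m m 1) ?A4) = det ?A1 * det ?A4"
    by (rule det_four_block_mat_lower_left_zero_col) auto
  moreover have "det ?A1 = X 0 0"
    by (subst det_single) auto
  ultimately show ?thesis
    unfolding det_fun_def by simp
qed

lemma det_fun_lower_triangular_mult:
  assumes "\<And>i l. i < l \<Longrightarrow> l < n \<Longrightarrow> L i l = 0"
  shows "det_fun n (\<lambda>i j. \<Sum>l=0..<n. L i l * X l j) = (\<Prod>i=0..<n. L i i) * det_fun n X"
proof -
  let ?L = "mat n n (\<lambda>(i,l). L i l)" and ?X = "mat n n (\<lambda>(l,j). X l j)"
  have "mat n n (\<lambda>(i,j). \<Sum>l=0..<n. L i l * X l j) = ?L * ?X"
    by (rule eq_matI) (auto simp: scalar_prod_def intro!: sum.cong)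
  moreover have "det ?L = (\<Prod>i=0..<n. L i i)"
    using assms by (subst det_lower_triangular[of n]) (auto simp: prod_list_diag_prod)
  ultimately show ?thesis
    unfolding det_fun_def by (simp add: det_mult[of _ n])
qed

lemma det_fun_sum_products_expand:
  assumes "finite T"
  shows "det_fun k (\<lambda>u v. \<Sum>t\<in>T. a u t * b v t) =
    (\<Sum>f \<in> {0..<k} \<rightarrow>\<^sub>E T. (\<Prod>u=0..<k. a u (f u)) * det_fun k (\<lambda>u v. b v (f u)))"
proof -
  have "det_fun k (\<lambda>u v. \<Sum>t\<in>T. a u t * b v t) =
      (\<Sum>p | p permutes {0..<k}.
         signof p * (\<Sum>f \<in> {0..<k} \<rightarrow>\<^sub>E T. \<Prod>u=0..<k. a u (f u) * b (p u) (f u)))"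
    unfolding det_fun_Leibniz using assms by (simp add: prod_sum_PiE)
  also have "\<dots> = (\<Sum>f \<in> {0..<k} \<rightarrow>\<^sub>E T. (\<Prod>u=0..<k. a u (f u)) * det_fun k (\<lambda>u v. b v (f u)))"
    unfolding det_fun_Leibniz sum_distrib_left
    by (subst sum.swap) (auto intro!: sum.cong simp: prod.distrib ac_simps)
  finally show ?thesis .
qed

lemma bij_betw_compose_permutes:
  assumes s: "bij_betw s K S"
  shows "bij_betw (\<lambda>p. restrict (s \<circ> p) K) {p. p permutes K} {f \<in> K \<rightarrow>\<^sub>E S. bij_betw f K S}"
proof (rule bij_betw_byWitness[where f' = "\<lambda>f u. if u \<in> K then inv_into K s (f u) else u"])
  have inj: "inj_on s K" and img: "s ` K = S"
    using s by (auto simp: bij_betw_def)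
  show "\<forall>p \<in> {p. p permutes K}. (\<lambda>u. if u \<in> K then inv_into K s (restrict (s \<circ> p) K u) else u) = p"
    using inj by (auto simp: permutes_in_image permutes_not_in)
  show "\<forall>f \<in> {f \<in> K \<rightarrow>\<^sub>E S. bij_betw f K S}.
      restrict (s \<circ> (\<lambda>u. if u \<in> K then inv_into K s (f u) else u)) K = f"
  proof (clarify, rule ext)
    fix f u assume "f \<in> K \<rightarrow>\<^sub>E S"
    then show "restrict (s \<circ> (\<lambda>u. if u \<in> K then inv_into K s (f u) else u)) K u = f u"
      using img by (cases "u \<in> K") (auto simp: PiE_iff extensional_def f_inv_into_f)
  qed
  show "(\<lambda>p. restrict (s \<circ> p) K) ` {p. p permutes K} \<subseteq> {f \<in> K \<rightarrow>\<^sub>E S. bij_betw f K S}"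
  proof clarify
    fix p assume p: "p permutes K"
    have "bij_betw (s \<circ> p) K S"
      using bij_betw_trans[OF permutes_imp_bij[OF p] s] .
    then show "restrict (s \<circ> p) K \<in> K \<rightarrow>\<^sub>E S \<and> bij_betw (restrict (s \<circ> p) K) K S"
      by (auto simp: bij_betw_def inj_on_def)
  qed
  show "(\<lambda>f u. if u \<in> K then inv_into K s (f u) else u) ` {f \<in> K \<rightarrow>\<^sub>E S. bij_betw f K S}
      \<subseteq> {p. p permutes K}"
  proof clarify
    fix f assume f: "f \<in> K \<rightarrow>\<^sub>E S" "bij_betw f K S"
    have "bij_betw (inv_into K s \<circ> f) K K"
      using bij_betw_trans[OF f(2) bij_betw_inv_into[OF s]] .
    then have "bij_betw (\<lambda>u. if u \<in> K then inv_into K s (f u) else u) K K"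
      by (rule bij_betw_cong[THEN iffD1, rotated]) auto
    then show "(\<lambda>u. if u \<in> K then inv_into K s (f u) else u) permutes K"
      by (rule bij_imp_permutes) auto
  qed
qed

lemma sum_injections_by_image:
  assumes "finite K" "finite T"
  shows "(\<Sum>f | f \<in> K \<rightarrow>\<^sub>E T \<and> inj_on f K. h f) =
    (\<Sum>S | S \<subseteq> T \<and> card S = card K. \<Sum>f | f \<in> K \<rightarrow>\<^sub>E S \<and> bij_betw f K S. h f)"
proof -
  let ?I = "{f \<in> K \<rightarrow>\<^sub>E T. inj_on f K}"
  have "finite ?I"
    using assms by (auto intro: finite_subset[OF _ finite_PiE])
  moreover have "finite {S. S \<subseteq> T \<and> card S = card K}"
    using assms(2) by auto
  moreover have "(\<lambda>f. f ` K) ` ?I \<subseteq> {S. S \<subseteq> T \<and> card S = card K}"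
    by (auto simp: card_image)
  ultimately have "(\<Sum>S | S \<subseteq> T \<and> card S = card K. \<Sum>f | f \<in> ?I \<and> f ` K = S. h f) = sum h ?I"
    by (rule sum.group)
  moreover have "{f. f \<in> ?I \<and> f ` K = S} = {f. f \<in> K \<rightarrow>\<^sub>E S \<and> bij_betw f K S}" if "S \<subseteq> T" for S
    using that by (auto simp: bij_betw_def)
  ultimately show ?thesis
    by (metis (no_types, lifting) mem_Collect_eq sum.cong)
qed

lemma sum_bijections_prod_det_fun:
  assumes s: "bij_betw s {0..<k} S"
  shows "(\<Sum>f | f \<in> {0..<k} \<rightarrow>\<^sub>E S \<and> bij_betw f {0..<k} S.
      (\<Prod>u=0..<k. a u (f u)) * det_fun k (\<lambda>u v. b v (f u))) =
    det_fun k (\<lambda>u v. a u (s v)) * det_fun k (\<lambda>u v. b v (s u))"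
proof -
  let ?K = "{0..<k}"
  have "(\<Sum>f | f \<in> ?K \<rightarrow>\<^sub>E S \<and> bij_betw f ?K S. (\<Prod>u=0..<k. a u (f u)) * det_fun k (\<lambda>u v. b v (f u))) =
      (\<Sum>p | p permutes ?K. (\<Prod>u=0..<k. a u (restrict (s \<circ> p) ?K u)) *
         det_fun k (\<lambda>u v. b v (restrict (s \<circ> p) ?K u)))"
    by (rule sum.reindex_bij_betw[OF bij_betw_compose_permutes[OF s], symmetric])
  also have "\<dots> = (\<Sum>p | p permutes ?K.
      signof p * (\<Prod>u=0..<k. a u (s (p u))) * det_fun k (\<lambda>u v. b v (s u)))"
  proof (rule sum.cong[OF refl])
    fix p assume p: "p \<in> {p. p permutes ?K}"
    have "det_fun k (\<lambda>u v. b v (restrict (s \<circ> p) ?K u)) = det_fun k (\<lambda>u v. b v (s (p u)))"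
      by (rule det_fun_cong) auto
    also have "\<dots> = signof p * det_fun k (\<lambda>u v. b v (s u))"
      using p det_fun_permute_rows[of p k "\<lambda>u v. b v (s u)"] by simp
    finally show "(\<Prod>u=0..<k. a u (restrict (s \<circ> p) ?K u)) *
        det_fun k (\<lambda>u v. b v (restrict (s \<circ> p) ?K u)) =
      signof p * (\<Prod>u=0..<k. a u (s (p u))) * det_fun k (\<lambda>u v. b v (s u))"
      by simp
  qed
  also have "\<dots> = det_fun k (\<lambda>u v. a u (s v)) * det_fun k (\<lambda>u v. b v (s u))"
    by (simp add: det_fun_Leibniz sum_distrib_right)
  finally show ?thesis .
qed

theorem det_fun_Cauchy_Binet:
  fixes a b :: "nat \<Rightarrow> 'b::linorder \<Rightarrow> 'a::comm_ring_1"
  assumes T: "finite T"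
  shows "det_fun k (\<lambda>u v. \<Sum>t\<in>T. a u t * b v t) =
    (\<Sum>S | S \<subseteq> T \<and> card S = k.
       det_fun k (\<lambda>u v. a u (sorted_list_of_set S ! v)) *
       det_fun k (\<lambda>u v. b u (sorted_list_of_set S ! v)))"
proof -
  let ?K = "{0..<k}"
  have "det_fun k (\<lambda>u v. \<Sum>t\<in>T. a u t * b v t) =
      (\<Sum>f \<in> ?K \<rightarrow>\<^sub>E T. (\<Prod>u=0..<k. a u (f u)) * det_fun k (\<lambda>u v. b v (f u)))"
    by (rule det_fun_sum_products_expand[OF T])
  also have "\<dots> = (\<Sum>f | f \<in> ?K \<rightarrow>\<^sub>E T \<and> inj_on f ?K.
      (\<Prod>u=0..<k. a u (f u)) * det_fun k (\<lambda>u v. b v (f u)))"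
    by (rule sum.mono_neutral_right)
      (use T in \<open>auto simp: det_fun_rows_not_inj[of _ k "\<lambda>t v. b v t"] finite_PiE\<close>)
  also have "\<dots> = (\<Sum>S | S \<subseteq> T \<and> card S = k. \<Sum>f | f \<in> ?K \<rightarrow>\<^sub>E S \<and> bij_betw f ?K S.
      (\<Prod>u=0..<k. a u (f u)) * det_fun k (\<lambda>u v. b v (f u)))"
    using sum_injections_by_image[of ?K T] T by simp
  also have "\<dots> = (\<Sum>S | S \<subseteq> T \<and> card S = k.
      det_fun k (\<lambda>u v. a u (sorted_list_of_set S ! v)) *
      det_fun k (\<lambda>u v. b v (sorted_list_of_set S ! u)))"
  proof (rule sum.cong[OF refl])
    fix S assume "S \<in> {S. S \<subseteq> T \<and> card S = k}"
    then have "finite S" "card S = k"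
      using T by (auto intro: finite_subset)
    then have "bij_betw ((!) (sorted_list_of_set S)) ?K S"
      by (intro bij_betw_nth) auto
    then show "(\<Sum>f | f \<in> ?K \<rightarrow>\<^sub>E S \<and> bij_betw f ?K S.
        (\<Prod>u=0..<k. a u (f u)) * det_fun k (\<lambda>u v. b v (f u))) =
      det_fun k (\<lambda>u v. a u (sorted_list_of_set S ! v)) * det_fun k (\<lambda>u v. b v (sorted_list_of_set S ! u))"
      by (rule sum_bijections_prod_det_fun)
  qed
  also have "\<dots> = (\<Sum>S | S \<subseteq> T \<and> card S = k.
       det_fun k (\<lambda>u v. a u (sorted_list_of_set S ! v)) *
       det_fun k (\<lambda>u v. b u (sorted_list_of_set S ! v)))"
    using det_fun_transpose[of k "\<lambda>u v. b u (sorted_list_of_set _ ! v)"] by simp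
  finally show ?thesis .
qed

lemma det_fun_Vandermonde_step:
  "det_fun (Suc m) (\<lambda>i j. x j ^ i) =
     (\<Prod>j=0..<m. x (Suc j) - x 0) * det_fun m (\<lambda>i j. x (Suc j) ^ i)"
proof -
  define L where "L i l = (if l = i then 1 else 0) - (if Suc l = i then x 0 else 0)" for i l
  have "det_fun (Suc m) (\<lambda>i j. x j ^ i) =
      det_fun (Suc m) (\<lambda>i j. \<Sum>l=0..<Suc m. L i l * x j ^ l)"
    using det_fun_lower_triangular_mult[of "Suc m" L "\<lambda>i j. x j ^ i"] by (simp add: L_def)
  also have "\<dots> = det_fun (Suc m) (\<lambda>i j. if i = 0 then 1 else x j ^ (i - 1) * (x j - x 0))"
  proof (rule det_fun_cong)
    fix i j assume "i < Suc m"
    have "(\<Sum>l=0..<Suc m. L i l * x j ^ l) =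
        (\<Sum>l=0..<Suc m. if l = i then x j ^ l else 0) -
        (\<Sum>l=0..<Suc m. if Suc l = i then x 0 * x j ^ l else 0)"
      unfolding sum_subtractf[symmetric] by (rule sum.cong) (auto simp: L_def)
    also have "\<dots> = (if i = 0 then 1 else x j ^ (i - 1) * (x j - x 0))"
      using \<open>i < Suc m\<close> by (cases i) (auto simp: algebra_simps, metis Suc_lessI power_Suc)
    finally show "(\<Sum>l=0..<Suc m. L i l * x j ^ l) = (if i = 0 then 1 else x j ^ (i - 1) * (x j - x 0))" .
  qed
  also have "\<dots> = det_fun m (\<lambda>i j. x (Suc j) ^ i * (x (Suc j) - x 0))"
    by (subst det_fun_expand_first_col) auto
  also have "\<dots> = (\<Prod>j=0..<m. x (Suc j) - x 0) * det_fun m (\<lambda>i j. x (Suc j) ^ i)"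
    by (rule det_fun_mult_cols)
  finally show ?thesis .
qed

theorem det_fun_Vandermonde: "det_fun m (\<lambda>i j. x j ^ i) = (\<Prod>j<m. \<Prod>i<j. x j - x i)"
proof (induction m arbitrary: x)
  case 0
  show ?case by simp
next
  case (Suc m)
  have "det_fun (Suc m) (\<lambda>i j. x j ^ i) =
      (\<Prod>j<m. x (Suc j) - x 0) * (\<Prod>j<m. \<Prod>i<j. x (Suc j) - x (Suc i))"
    using Suc.IH[of "\<lambda>j. x (Suc j)"] by (simp add: det_fun_Vandermonde_step atLeast0LessThan)
  also have "\<dots> = (\<Prod>j<Suc m. \<Prod>i<j. x j - x i)"
    unfolding prod.lessThan_Suc_shift by (simp add: prod.distrib)
  finally show ?case .
qed

lemma Dz_eq_prod_sorted_list_of_set: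
  assumes "finite b"
  shows "Dz z b = (\<Prod>j<card b. \<Prod>i<j. z (sorted_list_of_set b ! j) - z (sorted_list_of_set b ! i))"
proof -
  define s where "s = sorted_list_of_set b"
  define D where "D = (SIGMA j:{..<card b}. {..<j})"
  have len: "length s = card b" and set: "set s = b" and sorted: "sorted_wrt (<) s"
    using assms by (auto simp: s_def)
  then have nth_less_iff: "s ! i < s ! j \<longleftrightarrow> i < j" if "i < card b" "j < card b" for i j
    using that by (metis linorder_neqE_nat not_less_iff_gr_or_eq sorted_wrt_nth_less)
  have "{(i,j). i \<in> b \<and> j \<in> b \<and> i < j} = (\<lambda>(j,i). (s ! i, s ! j)) ` D"
  proof (intro equalityI subsetI)
    fix x assume "x \<in> {(i,j). i \<in> b \<and> j \<in> b \<and> i < j}"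
    then obtain i j where "x = (s ! i, s ! j)" "i < card b" "j < card b" "s ! i < s ! j"
      using set len by (auto simp: in_set_conv_nth)
    then show "x \<in> (\<lambda>(j,i). (s ! i, s ! j)) ` D"
      using nth_less_iff unfolding D_def by force
  qed (use nth_less_iff len set in \<open>auto simp: D_def\<close>)
  moreover have "inj_on (\<lambda>(j,i). (s ! i, s ! j)) D"
    using sorted len unfolding D_def
    by (auto intro!: inj_onI simp: nth_eq_iff_index_eq strict_sorted_iff)
  ultimately have "Dz z b = (\<Prod>(j,i)\<in>D. z (s ! j) - z (s ! i))"
    unfolding Dz_def by (simp add: prod.reindex case_prod_unfold)
  also have "\<dots> = (\<Prod>j<card b. \<Prod>i<j. z (s ! j) - z (s ! i))"
    unfolding D_def by (rule prod.Sigma[symmetric]) auto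
  finally show ?thesis
    unfolding s_def .
qed

theorem det_fun_power_sums:
  assumes "finite I"
  shows "det_fun m (\<lambda>u v. \<Sum>i\<in>I. z i ^ (u + v)) = (\<Sum>b | b \<subseteq> I \<and> card b = m. (Dz z b)\<^sup>2)"
proof -
  have "det_fun m (\<lambda>u v. \<Sum>i\<in>I. z i ^ (u + v)) =
      (\<Sum>b | b \<subseteq> I \<and> card b = m. (det_fun m (\<lambda>u v. z (sorted_list_of_set b ! v) ^ u))\<^sup>2)"
    using det_fun_Cauchy_Binet[OF assms, of m "\<lambda>u i. z i ^ u" "\<lambda>u i. z i ^ u"]
    by (simp add: power_add power2_eq_square)
  also have "\<dots> = (\<Sum>b | b \<subseteq> I \<and> card b = m. (Dz z b)\<^sup>2)"
  proof (rule sum.cong[OF refl])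
    fix b assume "b \<in> {b. b \<subseteq> I \<and> card b = m}"
    then have "finite b" "card b = m"
      using assms by (auto intro: finite_subset)
    then show "(det_fun m (\<lambda>u v. z (sorted_list_of_set b ! v) ^ u))\<^sup>2 = (Dz z b)\<^sup>2"
      by (simp add: det_fun_Vandermonde Dz_eq_prod_sorted_list_of_set)
  qed
  finally show ?thesis .
qed

lemma det_fun_Chio_condensation_pivot_mult:
  fixes f :: "nat \<Rightarrow> nat \<Rightarrow> 'a::comm_ring_1"
  shows "f 0 0 * det_fun k (\<lambda>i j. f 0 0 * f (Suc i) (Suc j) - f (Suc i) 0 * f 0 (Suc j)) =
    f 0 0 ^ k * det_fun (Suc k) f"
proof -
  define L where "L i l = (if l = i then (if i = 0 then 1 else f 0 0) else 0) -
    (if l = 0 \<and> 0 < i then f i 0 else 0)" for i l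
  define g where "g i j = (if i = 0 then f 0 j else f 0 0 * f i j - f i 0 * f 0 j)" for i j
  have "(\<Prod>i=0..<Suc k. L i i) = f 0 0 ^ k"
    unfolding prod.atLeast0_lessThan_Suc_shift by (simp add: L_def)
  then have "f 0 0 ^ k * det_fun (Suc k) f = det_fun (Suc k) (\<lambda>i j. \<Sum>l=0..<Suc k. L i l * f l j)"
    using det_fun_lower_triangular_mult[of "Suc k" L f] by (simp add: L_def)
  also have "\<dots> = det_fun (Suc k) g"
  proof (rule det_fun_cong)
    fix i j assume "i < Suc k"
    have "(\<Sum>l=0..<Suc k. L i l * f l j) =
        (\<Sum>l=0..<Suc k. if l = i then (if i = 0 then 1 else f 0 0) * f l j else 0) -
        (\<Sum>l=0..<Suc k. if l = 0 \<and> 0 < i then f i 0 * f l j else 0)"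
      unfolding sum_subtractf[symmetric] by (rule sum.cong) (auto simp: L_def)
    also have "\<dots> = g i j"
      using \<open>i < Suc k\<close> by (simp add: g_def)
    finally show "(\<Sum>l=0..<Suc k. L i l * f l j) = g i j" .
  qed
  also have "\<dots> = f 0 0 * det_fun k (\<lambda>i j. f 0 0 * f (Suc i) (Suc j) - f (Suc i) 0 * f 0 (Suc j))"
    by (subst det_fun_expand_first_col) (auto simp: g_def)
  finally show ?thesis ..
qed

lemma poly_det_fun: "poly (det_fun k X) c = det_fun k (\<lambda>i j. poly (X i j) c)"
  unfolding det_fun_Leibniz by (simp add: poly_sum poly_prod)

lemma monic_mult_eq_0_iff:
  fixes p q :: "'a::comm_ring_1 poly"
  assumes "lead_coeff p = 1"
  shows "p * q = 0 \<longleftrightarrow> q = 0"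
proof
  assume pq: "p * q = 0"
  have "coeff (p * q) (degree p + degree q) = lead_coeff q"
    using assms by (simp add: coeff_mult_degree_sum)
  then show "q = 0"
    using pq by simp
qed simp

text \<open>Chio's identity holds over any commutative ring: the pivot is cancelled generically, by
  replacing it with the monic polynomial \<open>X + f 0 0\<close> and evaluating at \<open>X = 0\<close> afterwards.\<close>

theorem det_fun_Chio_condensation:
  fixes f :: "nat \<Rightarrow> nat \<Rightarrow> 'a::comm_ring_1"
  assumes "k \<ge> 1"
  shows "det_fun k (\<lambda>i j. f 0 0 * f (Suc i) (Suc j) - f (Suc i) 0 * f 0 (Suc j)) =
    f 0 0 ^ (k - 1) * det_fun (Suc k) f"
proof -
  define F where "F i j = (if i = 0 \<and> j = 0 then [:f 0 0, 1:] else [:f i j:])" for i j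
  define C where "C = det_fun k (\<lambda>i j. F 0 0 * F (Suc i) (Suc j) - F (Suc i) 0 * F 0 (Suc j))"
  have "F 0 0 * C = F 0 0 * (F 0 0 ^ (k - 1) * det_fun (Suc k) F)"
    using det_fun_Chio_condensation_pivot_mult[of F k] assms unfolding C_def
    by (metis Suc_diff_le diff_Suc_1 mult.assoc power_Suc)
  then have "F 0 0 * (C - F 0 0 ^ (k - 1) * det_fun (Suc k) F) = 0"
    by (simp add: right_diff_distrib)
  moreover have "lead_coeff (F 0 0) = 1"
    by (simp add: F_def)
  ultimately have "C = F 0 0 ^ (k - 1) * det_fun (Suc k) F"
    using monic_mult_eq_0_iff by fastforce
  then have "poly C 0 = poly (F 0 0 ^ (k - 1) * det_fun (Suc k) F) 0"
    by simp
  moreover have "poly C 0 = det_fun k (\<lambda>i j. f 0 0 * f (Suc i) (Suc j) - f (Suc i) 0 * f 0 (Suc j))"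
    unfolding C_def poly_det_fun by (rule det_fun_cong) (simp add: F_def)
  moreover have "poly (det_fun (Suc k) F) 0 = det_fun (Suc k) f"
    unfolding poly_det_fun by (rule det_fun_cong) (simp add: F_def)
  ultimately show ?thesis
    by (simp add: F_def poly_power)
qed

lemma sum_multisets_of_size_eq_sum_subsets:
  fixes g :: "'b::linorder list \<Rightarrow> 'a::comm_monoid_add"
  assumes A: "finite A" and g: "\<And>xs. \<not> distinct xs \<Longrightarrow> g xs = 0"
  shows "(\<Sum>\<beta>\<in>multisets_of_size A k. g (sorted_list_of_multiset \<beta>)) =
    (\<Sum>S | S \<subseteq> A \<and> card S = k. g (sorted_list_of_set S))"
proof -
  let ?S = "{S. S \<subseteq> A \<and> card S = k}"
  have fin: "finite S" if "S \<in> ?S" for S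
    using that A by (auto intro: finite_subset)
  have inj: "inj_on mset_set ?S"
    by (rule inj_onI) (metis fin finite_set_mset_mset_set)
  have "(\<Sum>\<beta>\<in>multisets_of_size A k. g (sorted_list_of_multiset \<beta>)) =
      (\<Sum>\<beta>\<in>mset_set ` ?S. g (sorted_list_of_multiset \<beta>))"
  proof (rule sum.mono_neutral_right)
    show "finite (multisets_of_size A k)"
      using A by (rule finite_multisets_of_size)
    show "mset_set ` ?S \<subseteq> multisets_of_size A k"
    proof (rule image_subsetI)
      fix S assume "S \<in> ?S"
      with fin[OF this] show "mset_set S \<in> multisets_of_size A k"
        by (simp add: multisets_of_size_def)
    qed
    show "\<forall>\<beta>\<in>multisets_of_size A k - mset_set ` ?S. g (sorted_list_of_multiset \<beta>) = 0"
    proof (intro ballI g notI)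
      fix \<beta> assume \<beta>: "\<beta> \<in> multisets_of_size A k - mset_set ` ?S"
        and distinct: "distinct (sorted_list_of_multiset \<beta>)"
      let ?xs = "sorted_list_of_multiset \<beta>"
      have "\<beta> = mset_set (set ?xs)"
        using mset_set_set[OF distinct] by simp
      moreover have "set ?xs \<in> ?S"
        using \<beta> distinct_card[OF distinct]
        by (simp add: multisets_of_size_def flip: size_mset)
      ultimately show False
        using \<beta> by blast
    qed
  qed
  also have "\<dots> = (\<Sum>S\<in>?S. g (sorted_list_of_set S))"
    using inj by (simp add: sum.reindex)
  finally show ?thesis .
qed

definition increasing_pairs :: "nat \<Rightarrow> (nat \<times> nat) set" where
  "increasing_pairs n = {(i,j). 1 \<le> i \<and> i < j \<and> j \<le> n}"

lemma Pairs_eq_multisets_of_size: "Pairs k n = multisets_of_size (increasing_pairs n) k"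
  by (auto simp: Pairs_def multisets_of_size_def increasing_pairs_def)

lemma finite_increasing_pairs [simp]: "finite (increasing_pairs n)"
  by (rule finite_subset[of _ "{1..n} \<times> {1..n}"]) (auto simp: increasing_pairs_def)

lemma increasing_pairs_Suc:
  "increasing_pairs (Suc n) = increasing_pairs n \<union> (\<lambda>i. (i, Suc n)) ` {1..n}"
  by (auto simp: increasing_pairs_def)

lemma sum_increasing_pairs_Lagrange:
  fixes \<alpha> \<beta> :: "nat \<Rightarrow> 'a::comm_ring_1"
  shows "(\<Sum>(i,j)\<in>increasing_pairs n. (\<alpha> i - \<alpha> j) * (\<beta> i - \<beta> j)) =
    of_nat n * (\<Sum>i=1..n. \<alpha> i * \<beta> i) - (\<Sum>i=1..n. \<alpha> i) * (\<Sum>i=1..n. \<beta> i)"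
proof (induction n)
  case 0
  have "increasing_pairs 0 = {}"
    by (auto simp: increasing_pairs_def)
  then show ?case by simp
next
  case (Suc n)
  have "increasing_pairs n \<inter> (\<lambda>i. (i, Suc n)) ` {1..n} = {}"
    by (auto simp: increasing_pairs_def)
  then have "(\<Sum>(i,j)\<in>increasing_pairs (Suc n). (\<alpha> i - \<alpha> j) * (\<beta> i - \<beta> j)) =
      (\<Sum>(i,j)\<in>increasing_pairs n. (\<alpha> i - \<alpha> j) * (\<beta> i - \<beta> j)) +
      (\<Sum>(i,j)\<in>(\<lambda>i. (i, Suc n)) ` {1..n}. (\<alpha> i - \<alpha> j) * (\<beta> i - \<beta> j))"
    unfolding increasing_pairs_Suc by (simp add: sum.union_disjoint)
  also have "(\<Sum>(i,j)\<in>(\<lambda>i. (i, Suc n)) ` {1..n}. (\<alpha> i - \<alpha> j) * (\<beta> i - \<beta> j)) =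
      (\<Sum>i=1..n. \<alpha> i * \<beta> i) - \<beta> (Suc n) * (\<Sum>i=1..n. \<alpha> i) -
      \<alpha> (Suc n) * (\<Sum>i=1..n. \<beta> i) + of_nat n * (\<alpha> (Suc n) * \<beta> (Suc n))"
    by (simp add: sum.reindex inj_on_def algebra_simps sum.distrib sum_subtractf sum_distrib_left)
  finally show ?case
    unfolding Suc.IH by (simp add: algebra_simps)
qed

lemma det_R3:
  "det (R3 z xs) = det_fun (length xs) (\<lambda>u v. z (fst (xs ! v)) ^ (u+1) - z (snd (xs ! v)) ^ (u+1))"
  unfolding R3_def det_fun_def by simp

lemma det_R3_not_distinct:
  assumes "\<not> distinct xs"
  shows "det (R3 z xs) = 0"
proof -
  obtain i j where "i < length xs" "j < length xs" "i \<noteq> j" "xs ! i = xs ! j"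
    using assms by (auto simp: distinct_conv_nth)
  then show ?thesis
    by (intro det_identical_columns[of _ "length xs" i j]) (auto simp: R3_def)
qed

definition power_sum :: "(nat \<Rightarrow> 'a::comm_ring_1) \<Rightarrow> nat \<Rightarrow> nat \<Rightarrow> 'a" where
  "power_sum z n m = (\<Sum>i=1..n. z i ^ m)"

lemma power_sum_0 [simp]: "power_sum z n 0 = of_nat n"
  by (simp add: power_sum_def)

lemma sum_sq_det_R3_eq_det_fun:
  "(\<Sum>S | S \<subseteq> increasing_pairs n \<and> card S = k. (det (R3 z (sorted_list_of_set S)))\<^sup>2) =
    det_fun k (\<lambda>u v. of_nat n * power_sum z n (Suc u + Suc v) -
      power_sum z n (Suc u) * power_sum z n (Suc v))"
proof -
  define a where "a u t = z (fst t) ^ (u+1) - z (snd t) ^ (u+1)" for u t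
  have "(\<Sum>S | S \<subseteq> increasing_pairs n \<and> card S = k. (det (R3 z (sorted_list_of_set S)))\<^sup>2) =
      (\<Sum>S | S \<subseteq> increasing_pairs n \<and> card S = k.
         det_fun k (\<lambda>u v. a u (sorted_list_of_set S ! v)) * det_fun k (\<lambda>u v. a u (sorted_list_of_set S ! v)))"
  proof (rule sum.cong[OF refl])
    fix S assume "S \<in> {S. S \<subseteq> increasing_pairs n \<and> card S = k}"
    then have "length (sorted_list_of_set S) = k"
      by (auto dest: finite_subset)
    then show "(det (R3 z (sorted_list_of_set S)))\<^sup>2 =
        det_fun k (\<lambda>u v. a u (sorted_list_of_set S ! v)) * det_fun k (\<lambda>u v. a u (sorted_list_of_set S ! v))"
      by (simp add: det_R3 a_def power2_eq_square)
  qed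
  also have "\<dots> = det_fun k (\<lambda>u v. \<Sum>t\<in>increasing_pairs n. a u t * a v t)"
    by (rule det_fun_Cauchy_Binet[symmetric]) simp
  also have "\<dots> = det_fun k (\<lambda>u v. of_nat n * power_sum z n (Suc u + Suc v) -
      power_sum z n (Suc u) * power_sum z n (Suc v))"
  proof (rule det_fun_cong)
    fix u v
    have "(\<Sum>t\<in>increasing_pairs n. a u t * a v t) =
        (\<Sum>(i,j)\<in>increasing_pairs n. (z i ^ Suc u - z j ^ Suc u) * (z i ^ Suc v - z j ^ Suc v))"
      by (simp add: a_def case_prod_beta')
    also have "\<dots> = of_nat n * (\<Sum>i=1..n. z i ^ Suc u * z i ^ Suc v) -
        (\<Sum>i=1..n. z i ^ Suc u) * (\<Sum>i=1..n. z i ^ Suc v)"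
      by (rule sum_increasing_pairs_Lagrange)
    finally show "(\<Sum>t\<in>increasing_pairs n. a u t * a v t) =
        of_nat n * power_sum z n (Suc u + Suc v) - power_sum z n (Suc u) * power_sum z n (Suc v)"
      by (simp only: power_sum_def power_add)
  qed
  finally show ?thesis .
qed

theorem theorem5p1:
  fixes z :: "nat \<Rightarrow> 'a::comm_ring_1" and n k :: nat
  assumes "n \<ge> 2" and "k \<ge> 1"
  shows "(\<Sum>\<beta>\<in>Pairs k n. (det (R3 z (sorted_list_of_multiset \<beta>)))^2)
         = of_nat n ^ (k - 1) * (\<Sum>b\<in>Cset (k+1) n. (Dz z b)^2)"
proof -
  have "(\<Sum>\<beta>\<in>Pairs k n. (det (R3 z (sorted_list_of_multiset \<beta>)))^2) =
      (\<Sum>S | S \<subseteq> increasing_pairs n \<and> card S = k. (det (R3 z (sorted_list_of_set S)))\<^sup>2)"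
    unfolding Pairs_eq_multisets_of_size
    by (rule sum_multisets_of_size_eq_sum_subsets) (simp_all add: det_R3_not_distinct)
  also have "\<dots> = det_fun k (\<lambda>u v. of_nat n * power_sum z n (Suc u + Suc v) -
      power_sum z n (Suc u) * power_sum z n (Suc v))"
    by (rule sum_sq_det_R3_eq_det_fun)
  also have "\<dots> = of_nat n ^ (k - 1) * det_fun (Suc k) (\<lambda>u v. power_sum z n (u + v))"
    using det_fun_Chio_condensation[OF assms(2), of "\<lambda>u v. power_sum z n (u + v)"] by simp
  also have "det_fun (Suc k) (\<lambda>u v. power_sum z n (u + v)) = (\<Sum>b\<in>Cset (k+1) n. (Dz z b)\<^sup>2)"
    using det_fun_power_sums[of "{1..n}" "Suc k" z] by (simp add: power_sum_def Cset_def)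
  finally show ?thesis .
qed

end
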